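(* Let $H=(V,E)$ be a loopy graph with $|V|=5$ and $\mathrm{vm}(H)=4$. Then $|E|\le 10$.
   Context: A loopy graph is a finite graph with no isolated vertices and no multiple edges, possibly with loops (a loop counts as one edge). A matching is a set of pairwise vertex-disjoint edges, loops allowed; $\mathrm{vm}(H)$ is the maximum number of vertices touched by a matching of $H$. *)

theory Defs
  imports Main
begin

text \<open>A loopy graph (V, E): edges are subsets of V of size 1 (a loop) or 2.
  Representing E as a set of sets excludes multiple edges.\<close>
definition loopy_graph :: "'a set \<Rightarrow> 'a set set \<Rightarrow> bool" where
  "loopy_graph V E \<longleftrightarrow> finite V \<and>
     (\<forall>e\<in>E. e \<subseteq> V \<and> (card e = 1 \<or> card e = 2)) \<and>
     (\<forall>v\<in>V. \<exists>e\<in>E. v \<in> e)"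

definition matching :: "'a set set \<Rightarrow> 'a set set \<Rightarrow> bool" where
  "matching E M \<longleftrightarrow> M \<subseteq> E \<and> (\<forall>e\<in>M. \<forall>f\<in>M. e \<noteq> f \<longrightarrow> e \<inter> f = {})"

definition vm :: "'a set set \<Rightarrow> nat" where
  "vm E = Max {card (\<Union>M) | M. matching E M}"

end

theory Submission
  imports Defs
begin

text \<open>Identify the five vertices with the integers mod 5. The 15 possible edges (5 loops and
  10 pairs) split into the five perfect matchings \<open>{{i}, {i+1, i-1}, {i+2, i-2}}\<close>.
  Since \<open>vm(H) = 4\<close>, none of them lies in \<open>E\<close>, so \<open>E\<close> misses at least one edge of
  each and has at most \<open>15 - 5 = 10\<close> edges.\<close>

lemma card_Union_le_vm:
  assumes "loopy_graph V E" and "matching E M"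
  shows "card (\<Union>M) \<le> vm E"
proof -
  have "finite V"
    using assms(1) unfolding loopy_graph_def by blast
  have "card (\<Union>N) \<le> card V" if "matching E N" for N
  proof -
    from assms(1) that have "\<Union>N \<subseteq> V"
      unfolding loopy_graph_def matching_def by blast
    then show ?thesis
      by (rule card_mono[OF \<open>finite V\<close>])
  qed
  then have "{card (\<Union>N) | N. matching E N} \<subseteq> {..card V}"
    by auto
  then have "finite {card (\<Union>N) | N. matching E N}"
    by (rule finite_subset) simp
  then show ?thesis
    unfolding vm_def using assms(2) by (blast intro: Max_ge)
qed

lemma partition_not_subset_if_vm_less_card:
  assumes "loopy_graph V E" and "vm E < card V"
    and "pairwise disjnt C" and "\<Union>C = V"
  shows "\<not> C \<subseteq> E"
proof
  assume "C \<subseteq> E"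
  with assms(3) have "matching E C"
    unfolding matching_def pairwise_def disjnt_def by blast
  with assms show False
    using card_Union_le_vm by fastforce
qed

lemma card_le_sum_card_minus_one:
  assumes "finite I" and "\<And>i. i \<in> I \<Longrightarrow> finite (C i)"
    and "E \<subseteq> (\<Union>i\<in>I. C i)" and "\<And>i. i \<in> I \<Longrightarrow> \<not> C i \<subseteq> E"
  shows "card E \<le> (\<Sum>i\<in>I. card (C i) - 1)"
proof -
  from assms(3) have "E = (\<Union>i\<in>I. C i \<inter> E)"
    by blast
  then have "card E = card (\<Union>i\<in>I. C i \<inter> E)"
    by (rule arg_cong)
  also have "\<dots> \<le> (\<Sum>i\<in>I. card (C i \<inter> E))"
    using assms(1) by (rule card_UN_le)
  also have "\<dots> \<le> (\<Sum>i\<in>I. card (C i) - 1)"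
  proof (rule sum_mono)
    fix i assume "i \<in> I"
    with assms(4) have "C i \<inter> E \<subset> C i"
      by blast
    with assms(2)[OF \<open>i \<in> I\<close>] have "card (C i \<inter> E) < card (C i)"
      by (rule psubset_card_mono)
    then show "card (C i \<inter> E) \<le> card (C i) - 1"
      by linarith
  qed
  finally show ?thesis .
qed

definition pentagon_cover :: "(nat \<Rightarrow> 'a) \<Rightarrow> nat \<Rightarrow> 'a set set" where
  "pentagon_cover v i =
     {{v i}, {v ((i + 1) mod 5), v ((i + 4) mod 5)}, {v ((i + 2) mod 5), v ((i + 3) mod 5)}}"

lemma card_pentagon_cover_le: "card (pentagon_cover v i) \<le> 3"
  unfolding pentagon_cover_def by (intro card_insert_le_m1) simp_all

lemma Union_pentagon_cover:
  assumes "i < 5"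
  shows "\<Union>(pentagon_cover v i) = v ` {..<5}"
proof -
  have "{..<5::nat} = {0, 1, 2, 3, 4}" by auto
  moreover have "i \<in> {0, 1, 2, 3, 4}" using assms by auto
  ultimately show ?thesis
    unfolding pentagon_cover_def
    by (elim insertE emptyE) (simp_all add: insert_commute numeral_2_eq_2)
qed

lemma pairwise_disjnt_pentagon_cover:
  assumes "inj_on v {..<5}" and "i < 5"
  shows "pairwise disjnt (pentagon_cover v i)"
proof -
  have "i \<in> {0, 1, 2, 3, 4}" using assms by auto
  then show ?thesis
    unfolding pentagon_cover_def
    by (elim insertE emptyE)
      (auto simp: pairwise_insert disjnt_def inj_on_eq_iff[OF assms(1)] numeral_2_eq_2)
qed

text \<open>The pair \<open>{x, y}\<close> lies in the matching with \<open>2 i = x + y\<close> mod 5, and 3 inverts 2 mod 5.\<close>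

lemma doubleton_in_pentagon_cover:
  assumes "x < 5" and "y < 5"
  shows "{v x, v y} \<in> pentagon_cover v (3 * (x + y) mod 5)"
proof -
  have "x \<in> {0, 1, 2, 3, 4}" and "y \<in> {0, 1, 2, 3, 4}" using assms by auto
  then show ?thesis
    unfolding pentagon_cover_def
    by (elim insertE emptyE)
      (simp_all add: numeral_2_eq_2 doubleton_eq_iff, simp add: eval_nat_numeral)
qed

lemma edge_in_pentagon_cover:
  assumes "e \<subseteq> v ` {..<5}" and "card e = 1 \<or> card e = 2"
  shows "\<exists>i<5. e \<in> pentagon_cover v i"
proof -
  obtain a b where ab: "e = {a, b}"
  proof (cases "card e = 1")
    case True
    then obtain a where "e = {a}"
      by (rule card_1_singletonE)
    then show ?thesis
      using that[of a a] by simp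
  next
    case False
    with assms(2) show ?thesis
      using that by (auto simp: card_2_iff)
  qed
  with assms(1) have "a \<in> v ` {..<5}" and "b \<in> v ` {..<5}"
    by auto
  then obtain x y where "x < 5" "y < 5" and "e = {v x, v y}"
    using ab by blast
  then have "e \<in> pentagon_cover v (3 * (x + y) mod 5)"
    using doubleton_in_pentagon_cover by blast
  then show ?thesis
    by (meson mod_less_divisor zero_less_numeral)
qed

theorem proposition5p7:
  fixes V :: "'a set" and E :: "'a set set"
  assumes "loopy_graph V E" and "card V = 5" and "vm E = 4"
  shows "card E \<le> 10"
proof -
  have "finite V"
    using assms(1) unfolding loopy_graph_def by blast
  with assms(2) obtain v where "bij_betw v {..<5::nat} V"
    using ex_bij_betw_nat_finite[of V] by (auto simp: atLeast0LessThan)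
  then have inj: "inj_on v {..<5}" and V: "V = v ` {..<5}"
    unfolding bij_betw_def by auto
  let ?C = "pentagon_cover v"
  have not_subset: "\<not> ?C i \<subseteq> E" if "i < 5" for i
  proof (rule partition_not_subset_if_vm_less_card[OF assms(1)])
    show "vm E < card V"
      using assms by simp
    show "pairwise disjnt (?C i)"
      using inj that by (rule pairwise_disjnt_pentagon_cover)
    show "\<Union>(?C i) = V"
      using that V by (simp add: Union_pentagon_cover)
  qed
  have "E \<subseteq> (\<Union>i<5. ?C i)"
  proof
    fix e assume "e \<in> E"
    with assms(1) V have "e \<subseteq> v ` {..<5}" and "card e = 1 \<or> card e = 2"
      unfolding loopy_graph_def by auto
    then show "e \<in> (\<Union>i<5. ?C i)"
      using edge_in_pentagon_cover by blast
  qed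
  then have "card E \<le> (\<Sum>i<5. card (?C i) - 1)"
    using not_subset by (intro card_le_sum_card_minus_one) (simp_all add: pentagon_cover_def)
  also have "\<dots> \<le> (\<Sum>i<5::nat. 2)"
    using card_pentagon_cover_le by (intro sum_mono) (simp add: le_diff_conv)
  finally show ?thesis
    by simp
qed

end
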